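(* Let $b\geq 2$ be fixed. For all $\beta\in\mathbb{R}$ with $\beta\notin\mathbb{Z}$ and all $N\geq 2$, \[ \left|\sum_{\substack{1\le m\leq N\\ (\overleftarrow{m},b)=1}}e(m\beta)\right|\ll_b\frac{\log N}{\|\beta\|}. \]
   Context: For a positive integer $n$ with $L$ digits in base $b$, $n=\sum_{0\leq i<L}\varepsilon_i(n)b^i$ ($\varepsilon_i(n)\in\{0,\dots,b-1\}$, $\varepsilon_{L-1}(n)\neq0$), its digital reverse is $\overleftarrow{n}=\sum_{0\leq i<L}\varepsilon_i(n)b^{L-1-i}$. $e(x)=\exp(2\pi ix)$ and $\|x\|=\min_{n\in\mathbb{Z}}|x-n|$. *)

theory Defs
  imports "HOL-Analysis.Analysis"
begin

fun digits :: "nat \<Rightarrow> nat \<Rightarrow> nat list" where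
  "digits b n = (if b < 2 \<or> n = 0 then [] else n mod b # digits b (n div b))"

definition digit_rev :: "nat \<Rightarrow> nat \<Rightarrow> nat" where
  "digit_rev b n = (let ds = digits b n; L = length ds in
     (\<Sum>i<L. ds ! i * b ^ (L - 1 - i)))"

definition e :: "real \<Rightarrow> complex" where
  "e x = exp (2 * pi * \<i> * complex_of_real x)"

definition dist_int :: "real \<Rightarrow> real" where
  "dist_int x = (INF n::int. \<bar>x - real_of_int n\<bar>)"

end

theory Submission
  imports Defs
begin

text \<open>
  Since every digit of m except the leading one is multiplied by a positive power of b in the
  reverse of m, the condition (rev m, b) = 1 only depends on the leading digit of m.  Hence the
  m \<le> N with (rev m, b) = 1 split, according to their number of digits and their leading digit,
  into at most (log N / log b + 2) b blocks of consecutive integers.  On each block the sum of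
  e(m \<beta>) is a geometric sum, bounded by 2 / |1 - e(\<beta>)| \<le> 2 / (3 \<parallel>\<beta>\<parallel>).
\<close>

lemma sin_ge_cubic: "x - \<bar>x\<bar> ^ 3 / 6 \<le> sin (x::real)"
proof -
  have "\<bar>sin x - x\<bar> \<le> \<bar>x\<bar> ^ 3 / 6"
  proof -
    have "(\<Sum>m<3. sin_coeff m * x ^ m) = x"
      by (simp add: numeral_3_eq_3 sin_coeff_def)
    moreover have "fact 3 = (6 :: real)"
      by (simp add: fact_numeral)
    ultimately show ?thesis
      using Maclaurin_sin_bound[of x 3] by simp
  qed
  then show ?thesis
    by arith
qed

lemma abs_sin_pi_ge:
  assumes "\<bar>t\<bar> \<le> 1 / 2"
  shows "3 / 2 * \<bar>t\<bar> \<le> \<bar>sin (pi * t)\<bar>"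
proof -
  define u where "u = pi * \<bar>t\<bar>"
  have u: "0 \<le> u" "u \<le> pi / 2"
    using assms by (auto simp: u_def)
  have "u\<^sup>2 \<le> (pi / 2)\<^sup>2"
    using u by (intro power_mono) auto
  also have "\<dots> \<le> 3"
  proof -
    have "pi * pi \<le> 3.2 * 3.2"
      using pi_approx by (intro mult_mono) auto
    then show ?thesis
      by (simp add: power2_eq_square)
  qed
  finally have "u / 2 \<le> u - u ^ 3 / 6"
    using mult_left_mono[of "u\<^sup>2" 3 u] u by (simp add: power2_eq_square power3_eq_cube)
  also have "\<dots> \<le> sin u"
    using sin_ge_cubic[of u] u by simp
  also have "sin u = \<bar>sin (pi * t)\<bar>"
    using u sin_ge_zero[of u] by (cases "t \<ge> 0") (auto simp: u_def)
  finally show ?thesis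
    using mult_right_mono[of 3 pi "\<bar>t\<bar>"] pi_gt3 by (simp add: u_def)
qed

lemma dist_int_eq_round: "dist_int x = \<bar>x - of_int (round x)\<bar>"
proof (rule antisym)
  show "dist_int x \<le> \<bar>x - of_int (round x)\<bar>"
    unfolding dist_int_def by (rule cINF_lower) (auto intro: bdd_belowI[of _ 0])
  show "\<bar>x - of_int (round x)\<bar> \<le> dist_int x"
    unfolding dist_int_def by (rule cINF_greatest) (auto intro: round_diff_minimal)
qed

lemma dist_int_pos:
  assumes "x \<notin> \<int>"
  shows "0 < dist_int x"
proof -
  have "x \<noteq> of_int (round x)"
    using assms Ints_of_int by metis
  then show ?thesis
    by (simp add: dist_int_eq_round)
qed

lemma e_add_of_int: "e (x + of_int n) = e x"
  unfolding e_def using exp_plus_2pin[of "2 * pi * \<i> * complex_of_real x" n]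
  by (simp add: algebra_simps)

lemma norm_1_minus_e: "norm (1 - e x) = 2 * \<bar>sin (pi * x)\<bar>"
  using dist_exp_i_1[of "2 * pi * x"] unfolding e_def
  by (simp add: norm_minus_commute mult.commute mult.left_commute)

lemma norm_1_minus_e_ge: "3 * dist_int x \<le> norm (1 - e x)"
proof -
  define t where "t = x - of_int (round x)"
  have "\<bar>t\<bar> \<le> 1 / 2"
    using of_int_round_abs_le[of x] by (simp add: t_def abs_minus_commute)
  then have "3 * \<bar>t\<bar> \<le> norm (1 - e t)"
    using abs_sin_pi_ge[of t] by (simp add: norm_1_minus_e)
  also have "e t = e x"
    using e_add_of_int[of t "round x"] by (simp add: t_def)
  finally show ?thesis
    by (simp add: dist_int_eq_round t_def)
qed

lemma norm_e [simp]: "norm (e x) = 1"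
  unfolding e_def by simp

lemma e_of_nat_mult: "e (of_nat m * x) = e x ^ m"
  unfolding e_def by (simp add: exp_of_nat_mult[symmetric] algebra_simps)

definition order_convex :: "'a::order set \<Rightarrow> bool" where
  "order_convex S \<longleftrightarrow> (\<forall>x\<in>S. \<forall>y\<in>S. {x..y} \<subseteq> S)"

lemma order_convex_Int: "order_convex S \<Longrightarrow> order_convex T \<Longrightarrow> order_convex (S \<inter> T)"
  unfolding order_convex_def by blast

lemma order_convex_atLeastAtMost: "order_convex {a..b}"
  unfolding order_convex_def by auto

lemma order_convex_eq_atLeastAtMost_Min_Max:
  fixes S :: "'a::linorder set"
  assumes "order_convex S" "finite S" "S \<noteq> {}"
  shows "S = {Min S..Max S}"
  using assms unfolding order_convex_def by (auto intro: Min_in Max_in)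

lemma norm_sum_power_order_convex_le:
  fixes z :: "'a::real_normed_field"
  assumes "norm z = 1" "z \<noteq> 1" "order_convex S" "finite S"
  shows "norm (\<Sum>i\<in>S. z ^ i) \<le> 2 / norm (1 - z)"
proof (cases "S = {}")
  case False
  then have S: "S = {Min S..Max S}"
    using assms order_convex_eq_atLeastAtMost_Min_Max by blast
  have "norm (z ^ Min S - z ^ Suc (Max S)) \<le> 2"
    using norm_triangle_ineq4[of "z ^ Min S" "z ^ Suc (Max S)"] assms(1) by (simp add: norm_power norm_mult)
  then show ?thesis
    using assms(2) by (subst S) (simp add: sum_gp norm_divide divide_right_mono)
qed simp

lemma norm_sum_power_fibres_le:
  fixes z :: "'a::real_normed_field" and f :: "nat \<Rightarrow> 'b"
  assumes "norm z = 1" "z \<noteq> 1" "finite A" "finite T" "f ` A \<subseteq> T"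
    and "\<And>y. order_convex {x\<in>A. f x = y}"
  shows "norm (\<Sum>i\<in>A. z ^ i) \<le> card T * (2 / norm (1 - z))"
proof -
  have "(\<Sum>i\<in>A. z ^ i) = (\<Sum>y\<in>T. \<Sum>i\<in>{x\<in>A. f x = y}. z ^ i)"
    using sum.group[OF assms(3-5), of "\<lambda>i. z ^ i"] by simp
  also have "norm \<dots> \<le> (\<Sum>y\<in>T. norm (\<Sum>i\<in>{x\<in>A. f x = y}. z ^ i))"
    by (rule norm_sum)
  also have "\<dots> \<le> (\<Sum>y\<in>T. 2 / norm (1 - z))"
    using assms by (intro sum_mono norm_sum_power_order_convex_le) auto
  finally show ?thesis
    by simp
qed

declare digits.simps [simp del]

definition leading_digit :: "nat \<Rightarrow> nat \<Rightarrow> nat" where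
  "leading_digit b m = last (digits b m)"

lemma digits_Cons: "2 \<le> b \<Longrightarrow> 0 < n \<Longrightarrow> digits b n = n mod b # digits b (n div b)"
  by (subst digits.simps) simp

lemma digits_0 [simp]: "digits b 0 = []"
  by (subst digits.simps) simp

lemma length_digits_leading_digit:
  assumes b: "2 \<le> b" and "b ^ L \<le> m" "m < b ^ Suc L"
  shows "length (digits b m) = Suc L \<and> leading_digit b m = m div b ^ L"
  using assms(2,3) unfolding leading_digit_def
proof (induction L arbitrary: m)
  case 0
  then have "digits b m = [m]"
    using b digits_Cons[of b m] by simp
  then show ?case
    by simp
next
  case (Suc L)
  have "0 < m"
    using Suc.prems(1) b by (metis less_le_trans zero_less_power pos2)
  have "b ^ L \<le> m div b" "m div b < b ^ Suc L"
    using Suc.prems b by (simp_all add: less_eq_div_iff_mult_less_eq div_less_iff_less_mult mult.commute)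
  then have "length (digits b (m div b)) = Suc L \<and> last (digits b (m div b)) = m div b div b ^ L"
    by (rule Suc.IH)
  then show ?case
    using digits_Cons[OF b \<open>0 < m\<close>] by (auto simp: div_mult2_eq)
qed

lemma ex_length_digits_leading_digit:
  assumes "2 \<le> b" "0 < m"
  obtains L where "b ^ L \<le> m" "m < b ^ Suc L"
    "length (digits b m) = Suc L" "leading_digit b m = m div b ^ L"
proof -
  obtain L where "b ^ L \<le> m" "m < b ^ Suc L"
    using ex_power_ivl1[OF assms(1), of m] assms(2) by auto
  with length_digits_leading_digit[OF assms(1) this] that show ?thesis
    by blast
qed

lemma digit_rev_mod_base:
  assumes b: "2 \<le> b" and "0 < m"
  shows "digit_rev b m mod b = leading_digit b m mod b"
proof -
  define ds where "ds = digits b m"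
  define n where "n = length ds - 1"
  have "ds \<noteq> []"
    using digits_Cons[OF assms] by (simp add: ds_def)
  then have len: "length ds = Suc n"
    by (simp add: n_def)
  have "digit_rev b m = (\<Sum>i<n. ds ! i * b ^ (n - i)) + ds ! n"
    by (simp add: digit_rev_def ds_def[symmetric] len)
  moreover have "b dvd (\<Sum>i<n. ds ! i * b ^ (n - i))"
    by (intro dvd_sum) auto
  moreover have "ds ! n = leading_digit b m"
    using \<open>ds \<noteq> []\<close> by (simp add: leading_digit_def ds_def[symmetric] last_conv_nth n_def)
  ultimately show ?thesis
    by auto
qed

lemma coprime_digit_rev_iff:
  assumes "2 \<le> b" "0 < m"
  shows "coprime (digit_rev b m) b \<longleftrightarrow> coprime (leading_digit b m) b"
  by (metis digit_rev_mod_base[OF assms] coprime_mod_left_iff assms(1) not_numeral_le_zero le_zero_eq)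

lemma order_convex_digits_fibre:
  assumes b: "2 \<le> b"
  shows "order_convex {m. 0 < m \<and> length (digits b m) = l \<and> leading_digit b m = d}"
  unfolding order_convex_def
proof (intro ballI subsetI)
  fix x y w
  assume x: "x \<in> {m. 0 < m \<and> length (digits b m) = l \<and> leading_digit b m = d}"
    and y: "y \<in> {m. 0 < m \<and> length (digits b m) = l \<and> leading_digit b m = d}"
    and w: "w \<in> {x..y}"
  obtain L where Lx: "b ^ L \<le> x" "length (digits b x) = Suc L" "leading_digit b x = x div b ^ L"
    using ex_length_digits_leading_digit[OF b] x by (metis mem_Collect_eq)
  obtain K where Ky: "y < b ^ Suc K" "length (digits b y) = Suc K" "leading_digit b y = y div b ^ K"
    using ex_length_digits_leading_digit[OF b] y by (metis mem_Collect_eq)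
  have "K = L"
    using x y Lx Ky by simp
  have w_range: "b ^ L \<le> w" "w < b ^ Suc L"
    using w Lx Ky \<open>K = L\<close> by auto
  have "x div b ^ L \<le> w div b ^ L" "w div b ^ L \<le> y div b ^ L"
    using w by (auto intro: div_le_mono)
  then have "w div b ^ L = d"
    using x y Lx Ky \<open>K = L\<close> by simp
  moreover have "0 < w"
    using w_range b by (metis less_le_trans zero_less_power pos2)
  moreover have "length (digits b w) = l" "leading_digit b w = w div b ^ L"
    using length_digits_leading_digit[OF b w_range] x Lx(2) by auto
  ultimately show "w \<in> {m. 0 < m \<and> length (digits b m) = l \<and> leading_digit b m = d}"
    by simp
qed

lemma order_convex_coprime_digit_rev_fibre:
  assumes "2 \<le> b"
  shows "order_convex
    {m \<in> {1..N}. coprime (digit_rev b m) b \<and> (length (digits b m), leading_digit b m) = (l, d)}"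
proof (cases "coprime d b")
  case True
  then have fibre: "{m \<in> {1..N}. coprime (digit_rev b m) b \<and> (length (digits b m), leading_digit b m) = (l, d)}
      = {1..N} \<inter> {m. 0 < m \<and> length (digits b m) = l \<and> leading_digit b m = d}"
    using coprime_digit_rev_iff[OF assms] by auto
  show ?thesis
    unfolding fibre by (intro order_convex_Int order_convex_atLeastAtMost order_convex_digits_fibre assms)
next
  case False
  then have empty: "{m \<in> {1..N}. coprime (digit_rev b m) b \<and> (length (digits b m), leading_digit b m) = (l, d)} = {}"
    using coprime_digit_rev_iff[OF assms] by auto
  show ?thesis
    unfolding empty order_convex_def by simp
qed

lemma length_digits_leading_digit_bounds:
  assumes b: "2 \<le> b" and "0 < m" "m \<le> N" "N < b ^ Suc L"
  shows "length (digits b m) \<le> Suc L" "leading_digit b m < b"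
proof -
  obtain K where K: "b ^ K \<le> m" "m < b ^ Suc K"
    "length (digits b m) = Suc K" "leading_digit b m = m div b ^ K"
    using ex_length_digits_leading_digit[OF b \<open>0 < m\<close>] .
  have "b ^ K < b ^ Suc L"
    using K(1) assms(3,4) by (meson le_less_trans le_trans)
  then have "K < Suc L"
    by (rule power_less_imp_less_exp[rotated]) (use b in simp)
  then show "length (digits b m) \<le> Suc L"
    using K(3) by simp
  show "leading_digit b m < b"
    using K(2,4) b by (simp add: div_less_iff_less_mult mult.commute)
qed

lemma exponent_le_log2:
  fixes L N :: nat
  assumes "2 ^ L \<le> N" "2 \<le> N"
  shows "real L + 2 \<le> 3 * log 2 N"
proof -
  have "1 \<le> log 2 N"
    using assms(2) by simp
  then show ?thesis
    using le_log2_of_power[OF assms(1)] by linarith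
qed

lemma norm_sum_e_coprime_digit_rev_le:
  assumes b: "2 \<le> b" and "\<beta> \<notin> \<int>" "N < b ^ Suc L"
  shows "norm (\<Sum>m\<in>{m\<in>{1..N}. coprime (digit_rev b m) b}. e (real m * \<beta>))
    \<le> (real L + 2) * b * (2 / (3 * dist_int \<beta>))"
proof -
  define A where "A = {m\<in>{1..N}. coprime (digit_rev b m) b}"
  define T where "T = {..Suc L} \<times> {..<b}"
  have "0 < dist_int \<beta>"
    using dist_int_pos[OF \<open>\<beta> \<notin> \<int>\<close>] .
  moreover have "3 * dist_int \<beta> \<le> norm (1 - e \<beta>)"
    by (rule norm_1_minus_e_ge)
  ultimately have "e \<beta> \<noteq> 1"
    by auto
  have "(\<lambda>m. (length (digits b m), leading_digit b m)) ` A \<subseteq> T"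
    using length_digits_leading_digit_bounds[OF b _ _ \<open>N < b ^ Suc L\<close>] by (auto simp: A_def T_def)
  moreover have "order_convex {m \<in> A. (length (digits b m), leading_digit b m) = p}" for p
    using order_convex_coprime_digit_rev_fibre[OF b, of N "fst p" "snd p"] by (simp add: A_def)
  ultimately have "norm (\<Sum>m\<in>A. e (real m * \<beta>)) \<le> card T * (2 / norm (1 - e \<beta>))"
    unfolding e_of_nat_mult using \<open>e \<beta> \<noteq> 1\<close>
    by (intro norm_sum_power_fibres_le) (auto simp: A_def T_def)
  also have "\<dots> \<le> card T * (2 / (3 * dist_int \<beta>))"
    using \<open>3 * dist_int \<beta> \<le> _\<close> \<open>0 < dist_int \<beta>\<close>
    by (intro mult_left_mono divide_left_mono mult_pos_pos) auto
  also have "real (card T) = (real L + 2) * b"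
    by (simp add: T_def algebra_simps)
  finally show ?thesis
    by (simp add: A_def)
qed

theorem lemma4p6:
  fixes b :: nat
  assumes "b \<ge> 2"
  shows "\<exists>C>0. \<forall>(\<beta>::real) (N::nat). \<beta> \<notin> \<int> \<longrightarrow> N \<ge> 2 \<longrightarrow>
           norm (\<Sum>m\<in>{m\<in>{1..N}. coprime (digit_rev b m) b}. e (real m * \<beta>))
             \<le> C * ln (real N) / dist_int \<beta>"
proof (intro exI[of _ "2 * real b / ln 2"] conjI allI impI)
  show "0 < 2 * real b / ln 2"
    using assms by simp
  fix \<beta> :: real and N :: nat
  assume "\<beta> \<notin> \<int>" "2 \<le> N"
  obtain L where L: "b ^ L \<le> N" "N < b ^ Suc L"
    using ex_power_ivl1[OF assms, of N] \<open>2 \<le> N\<close> by auto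
  have "2 ^ L \<le> N"
    using power_mono[OF assms, of L] L(1) by linarith
  then have "real L + 2 \<le> 3 * log 2 N"
    using exponent_le_log2 \<open>2 \<le> N\<close> by blast
  have "norm (\<Sum>m\<in>{m\<in>{1..N}. coprime (digit_rev b m) b}. e (real m * \<beta>))
      \<le> (real L + 2) * b * (2 / (3 * dist_int \<beta>))"
    using norm_sum_e_coprime_digit_rev_le[OF assms \<open>\<beta> \<notin> \<int>\<close> L(2)] .
  also have "\<dots> \<le> 3 * log 2 N * b * (2 / (3 * dist_int \<beta>))"
    using \<open>real L + 2 \<le> _\<close> dist_int_pos[OF \<open>\<beta> \<notin> \<int>\<close>] by (intro mult_right_mono) auto
  also have "\<dots> = 2 * real b / ln 2 * ln N / dist_int \<beta>"
    by (simp add: log_def mult_ac)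
  finally show "norm (\<Sum>m\<in>{m\<in>{1..N}. coprime (digit_rev b m) b}. e (real m * \<beta>))
      \<le> 2 * real b / ln 2 * ln (real N) / dist_int \<beta>" .
qed

end
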